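(* For all integers $n,k \geq 2$ there exists a set $S \subset \mathbb{R}^2$ such that any $k$ points of $S$ are visible from a common point of $S$ through polygonal paths of length $\leq n$ in $S$, but there exist $k+1$ points of $S$ that are not visible from any common point of $S$ through polygonal paths of length $\leq n$ in $S$.
   Context: For $S \subset \mathbb{R}^2$ and $x,y \in S$, "$x$ sees $y$ through $S$ by a polygonal path of length $m$" means there exist distinct points $x_1,\ldots,x_{m-1}$ such that the polygonal path $[x,x_1]\cup[x_1,x_2]\cup\cdots\cup[x_{m-1},y]$ is contained in $S$ (for $m=1$ this means $[x,y]\subset S$). "Visible through polygonal paths of length $\leq n$" means visible by such a path of some length $m \leq n$. *)

theory Defs
  imports "HOL-Analysis.Analysis"
begin

definition sees_by_path :: "(real^2) set \<Rightarrow> nat \<Rightarrow> real^2 \<Rightarrow> real^2 \<Rightarrow> bool" where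
  "sees_by_path S m x y \<longleftrightarrow>
     (\<exists>p :: (real^2) list. length p = m + 1 \<and> p ! 0 = x \<and> p ! m = y \<and>
        distinct (take (m - 1) (drop 1 p)) \<and>
        (\<forall>i<m. closed_segment (p ! i) (p ! Suc i) \<subseteq> S))"

definition visible_le :: "(real^2) set \<Rightarrow> nat \<Rightarrow> real^2 \<Rightarrow> real^2 \<Rightarrow> bool" where
  "visible_le S n x y \<longleftrightarrow> (\<exists>m. 1 \<le> m \<and> m \<le> n \<and> sees_by_path S m x y)"

end

theory Submission
  imports Defs
begin

(* The set is a fan built from k + 1 zigzag polygonal lines Z_0, ..., Z_k with n - 1 edges each,
   of amplitude 1/(2n) and placed at heights k + (k + 1)^j, together with spokes from the base
   points (0, i) to the first vertex of every Z_j with j \<noteq> i.  Any k points of the fan lie on the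
   zigzags and spokes of at most k indices j, so some base point (0, i) with i outside these
   indices reaches all of them: one spoke and at most n - 1 zigzag edges.

   Conversely, the edges and spokes lie on pairwise distinct lines, so every segment inside the
   fan lies inside a single edge or spoke.  Hence along a path the potential "n - x on Z_j, n on
   the spokes into Z_j, n + 1 elsewhere" drops by at most 1 per segment, and it is 0 at the far
   end of Z_j.  Because the heights grow geometrically, every point of the fan avoids some Z_j
   together with its spokes, so it cannot see the far ends of all k + 1 zigzags within n
   segments. *)

lemma successively_shortcut:
  "successively P (xs @ v # ys @ v # zs) \<Longrightarrow> successively P (xs @ v # zs)"
  by (simp add: successively_append_iff successively_Cons)

lemma visible_le_walk:
  assumes "successively (\<lambda>a b. closed_segment a b \<subseteq> S) (x # ps @ [y])" and "length ps < n"
  shows "visible_le S n x y"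
  using assms
proof (induction ps rule: length_induct)
  case (1 ps)
  show ?case
  proof (cases "distinct ps")
    case True
    have "sees_by_path S (length ps + 1) x y"
      unfolding sees_by_path_def
    proof (intro exI[of _ "x # ps @ [y]"] conjI allI impI)
      fix i assume "i < length ps + 1"
      then show "closed_segment ((x # ps @ [y]) ! i) ((x # ps @ [y]) ! Suc i) \<subseteq> S"
        using successively_nth[OF "1.prems"(1), of i] by simp
    qed (use True in \<open>auto simp: nth_append\<close>)
    then show ?thesis
      unfolding visible_le_def using "1.prems"(2) by (intro exI[of _ "length ps + 1"]) auto
  next
    case False
    then obtain as v bs cs where ps: "ps = as @ [v] @ bs @ [v] @ cs"
      using not_distinct_decomp by blast
    have "successively (\<lambda>a b. closed_segment a b \<subseteq> S) ((x # as) @ v # cs @ [y])"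
      using "1.prems"(1) successively_shortcut[of _ "x # as" v bs "cs @ [y]"] ps by simp
    then show ?thesis
      using "1.IH" "1.prems"(2) ps by (auto elim!: allE[of _ "as @ [v] @ cs"])
  qed
qed

lemma Icc_subset_closed_cofinite:
  fixes C F :: "real set"
  assumes "closed C" "finite F" "{a..b} - F \<subseteq> C" "a < b"
  shows "{a..b} \<subseteq> C"
proof
  fix t assume "t \<in> {a..b}"
  then have "t islimpt (F \<union> C)"
    using assms(3,4) islimpt_Icc islimpt_subset by (metis Diff_subset_conv sup_commute)
  then show "t \<in> C"
    using assms(1,2) closed_limpt islimpt_Un_finite by blast
qed

lemma finite_affine_zeros:
  fixes a b :: real
  assumes "a \<noteq> 0 \<or> b \<noteq> 0"
  shows "finite {t. (1 - t) * a + t * b = 0}"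
proof (cases "a = b")
  case True
  then show ?thesis using assms by (simp add: algebra_simps)
next
  case False
  then have "{t. (1 - t) * a + t * b = 0} = {a / (a - b)}"
    by (auto simp: field_simps)
  then show ?thesis by simp
qed

definition nonvertical_line :: "real \<Rightarrow> real \<Rightarrow> (real^2) set" where
  "nonvertical_line \<alpha> \<beta> = {p. p $ 2 = \<alpha> * p $ 1 + \<beta>}"

lemma nonvertical_line_affine:
  "(1 - t) *\<^sub>R x + t *\<^sub>R y \<in> nonvertical_line \<alpha> \<beta> \<longleftrightarrow>
   (1 - t) * (x $ 2 - \<alpha> * x $ 1 - \<beta>) + t * (y $ 2 - \<alpha> * y $ 1 - \<beta>) = 0"
  by (auto simp: nonvertical_line_def algebra_simps)

lemma convex_nonvertical_line: "convex (nonvertical_line \<alpha> \<beta>)"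
  unfolding convex_alt nonvertical_line_affine by (simp add: nonvertical_line_def)

lemma finite_segment_meets_nonvertical_line:
  assumes "x \<notin> nonvertical_line \<alpha> \<beta> \<or> y \<notin> nonvertical_line \<alpha> \<beta>"
  shows "finite {t. (1 - t) *\<^sub>R x + t *\<^sub>R y \<in> nonvertical_line \<alpha> \<beta>}"
  unfolding nonvertical_line_affine
  using assms by (intro finite_affine_zeros) (auto simp: nonvertical_line_def)

lemma nonvertical_line_unique:
  assumes "x \<noteq> y" "x \<in> nonvertical_line \<alpha> \<beta>" "y \<in> nonvertical_line \<alpha> \<beta>"
    "x \<in> nonvertical_line \<alpha>' \<beta>'" "y \<in> nonvertical_line \<alpha>' \<beta>'"
  shows "\<alpha> = \<alpha>' \<and> \<beta> = \<beta>'"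
proof -
  have "(\<alpha> - \<alpha>') * x $ 1 = \<beta>' - \<beta>" "(\<alpha> - \<alpha>') * y $ 1 = \<beta>' - \<beta>"
    using assms(2-5) by (simp_all add: nonvertical_line_def algebra_simps)
  moreover have "x $ 1 \<noteq> y $ 1"
    using assms(1-3) by (auto simp: nonvertical_line_def vec_eq_iff forall_2)
  ultimately have "\<alpha> = \<alpha>'"
    by (metis eq_iff_diff_eq_0 mult_cancel_left)
  then show ?thesis
    using assms(2,4) by (simp add: nonvertical_line_def)
qed

text \<open>All lines but the one through \<open>x\<close> and \<open>y\<close> meet the segment in finitely many points,
  and the remaining piece is closed.\<close>
lemma segment_subset_Union_segments:
  fixes x y :: "real^2" and U V :: "'i \<Rightarrow> real^2"
  assumes "finite I" "inj_on (\<lambda>l. (\<alpha> l, \<beta> l)) I"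
    and on_line: "\<And>l. l \<in> I \<Longrightarrow>
      U l \<in> nonvertical_line (\<alpha> l) (\<beta> l) \<and> V l \<in> nonvertical_line (\<alpha> l) (\<beta> l)"
    and "closed_segment x y \<subseteq> (\<Union>l\<in>I. closed_segment (U l) (V l))"
  shows "\<exists>l\<in>I. closed_segment x y \<subseteq> closed_segment (U l) (V l)"
proof (cases "x = y")
  case True
  then show ?thesis using assms(4) by auto
next
  case False
  define pt where "pt t = (1 - t) *\<^sub>R x + t *\<^sub>R y" for t :: real
  define L
    where "L = {l \<in> I. x \<in> nonvertical_line (\<alpha> l) (\<beta> l) \<and> y \<in> nonvertical_line (\<alpha> l) (\<beta> l)}"
  have L_single: "l = l'" if "l \<in> L" "l' \<in> L" for l l'
    using that nonvertical_line_unique[OF False] assms(2) unfolding L_def inj_on_def by blast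
  define F where "F = (\<Union>l\<in>I - L. {t. pt t \<in> nonvertical_line (\<alpha> l) (\<beta> l)})"
  have "finite F"
    unfolding F_def pt_def L_def using assms(1) finite_segment_meets_nonvertical_line by auto
  have cover: "\<exists>l\<in>L. pt t \<in> closed_segment (U l) (V l)" if "t \<in> {0..1} - F" for t
  proof -
    have "pt t \<in> closed_segment x y"
      using that unfolding pt_def closed_segment_image_interval by auto
    then obtain l where l: "l \<in> I" "pt t \<in> closed_segment (U l) (V l)"
      using assms(4) by blast
    then have "pt t \<in> nonvertical_line (\<alpha> l) (\<beta> l)"
      using on_line[OF l(1)] closed_segment_subset convex_nonvertical_line by blast
    then show ?thesis
      using l that unfolding F_def by blast
  qed
  have "L \<noteq> {}"
  proof
    assume "L = {}"
    then have "{0..1} \<subseteq> F" using cover by blast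
    then have "finite {0..1::real}"
      using \<open>finite F\<close> by (rule finite_subset)
    then show False
      using infinite_Icc[of "0::real" 1] by simp
  qed
  then obtain l0 where l0: "l0 \<in> L" by blast
  have "closed (pt -` closed_segment (U l0) (V l0))"
    unfolding pt_def by (intro continuous_closed_vimage closed_segment continuous_intros)
  moreover have "{0..1} - F \<subseteq> pt -` closed_segment (U l0) (V l0)"
    using cover L_single[OF l0] by fastforce
  ultimately have "{0..1} \<subseteq> pt -` closed_segment (U l0) (V l0)"
    using Icc_subset_closed_cofinite \<open>finite F\<close> by (metis zero_less_one)
  then show ?thesis
    using l0 unfolding L_def closed_segment_image_interval pt_def by blast
qed

datatype piece = Spoke nat nat | Edge nat nat

locale zigzag_fan =
  fixes n k :: nat
  assumes n_ge_2: "2 \<le> n" and k_ge_2: "2 \<le> k"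
begin

definition level :: "nat \<Rightarrow> real" where
  "level j = real (k + (k + 1) ^ j)"

definition amplitude :: real where
  "amplitude = 1 / (2 * real n)"

definition vertex :: "nat \<Rightarrow> nat \<Rightarrow> real^2" where
  "vertex j s = vector [1 + real s, level j + amplitude * real (s mod 2)]"

definition base :: "nat \<Rightarrow> real^2" where
  "base i = vector [0, real i]"

definition zigzag :: "nat \<Rightarrow> (real^2) set" where
  "zigzag j = (\<Union>s\<le>n - 2. closed_segment (vertex j s) (vertex j (Suc s)))"

definition spokes_to :: "nat \<Rightarrow> (real^2) set" where
  "spokes_to j = (\<Union>i\<in>{i. i \<le> k \<and> i \<noteq> j}. closed_segment (base i) (vertex j 0))"

definition fan :: "(real^2) set" where
  "fan = (\<Union>j\<le>k. zigzag j \<union> spokes_to j)"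

lemma vertex_nth [simp]:
  "vertex j s $ 1 = 1 + real s"
  "vertex j s $ 2 = level j + amplitude * real (s mod 2)"
  by (simp_all add: vertex_def)

lemma base_nth [simp]:
  "base i $ 1 = 0"
  "base i $ 2 = real i"
  by (simp_all add: base_def)

lemma level_ge: "real k + 1 \<le> level j"
  by (simp add: level_def)

lemma level_dist:
  assumes "j \<noteq> j'"
  shows "1 \<le> \<bar>level j - level j'\<bar>"
proof -
  have "(k + 1) ^ j \<noteq> (k + 1) ^ j'"
    using assms k_ge_2 power_inject_exp[of "k + 1" j j'] by simp
  then show ?thesis
    unfolding level_def by linarith
qed

lemma amplitude_pos: "0 < amplitude"
  using n_ge_2 by (simp add: amplitude_def)

lemma amplitude_le: "amplitude \<le> 1 / 4"
  using n_ge_2 by (simp add: amplitude_def field_simps)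

lemma amplitude_mult_n: "amplitude * real n = 1 / 2"
  using n_ge_2 by (simp add: amplitude_def field_simps)

fun piece_start :: "piece \<Rightarrow> real^2" where
  "piece_start (Spoke i j) = base i"
| "piece_start (Edge j s) = vertex j s"

fun piece_end :: "piece \<Rightarrow> real^2" where
  "piece_end (Spoke i j) = vertex j 0"
| "piece_end (Edge j s) = vertex j (Suc s)"

fun slope :: "piece \<Rightarrow> real" where
  "slope (Spoke i j) = level j - real i"
| "slope (Edge j s) = (if even s then amplitude else - amplitude)"

fun intercept :: "piece \<Rightarrow> real" where
  "intercept (Spoke i j) = real i"
| "intercept (Edge j s) =
     (if even s then level j - amplitude * (1 + real s) else level j + amplitude * (2 + real s))"

definition pieces :: "piece set" where
  "pieces = {Spoke i j | i j. i \<le> k \<and> j \<le> k \<and> i \<noteq> j} \<union>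
            {Edge j s | j s. j \<le> k \<and> s \<le> n - 2}"

lemma finite_pieces: "finite pieces"
proof -
  have "pieces \<subseteq> case_prod Spoke ` ({..k} \<times> {..k}) \<union> case_prod Edge ` ({..k} \<times> {..n - 2})"
    unfolding pieces_def by auto
  then show ?thesis
    by (rule finite_subset) simp
qed

lemma fan_eq_Union_pieces: "fan = (\<Union>P\<in>pieces. closed_segment (piece_start P) (piece_end P))"
  unfolding fan_def zigzag_def spokes_to_def pieces_def by fastforce

lemma piece_on_line:
  "piece_start P \<in> nonvertical_line (slope P) (intercept P) \<and>
   piece_end P \<in> nonvertical_line (slope P) (intercept P)"
  by (cases P) (auto simp: nonvertical_line_def algebra_simps)

lemma level_inj: "level j = level j' \<Longrightarrow> j = j'"
  using level_dist by force

lemma slope_Spoke_ge: "i \<le> k \<Longrightarrow> 1 \<le> slope (Spoke i j)"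
  using level_ge[of j] by simp

lemma slope_Edge_le: "slope (Edge j s) \<le> 1 / 4"
  using amplitude_le amplitude_pos by simp

lemma Edge_line_inj:
  assumes "s \<le> n - 2" "s' \<le> n - 2"
    and "slope (Edge j s) = slope (Edge j' s')" "intercept (Edge j s) = intercept (Edge j' s')"
  shows "j = j' \<and> s = s'"
proof -
  have "even s \<longleftrightarrow> even s'"
    using assms(3) amplitude_pos by (auto split: if_splits)
  then have "level j - level j' = amplitude * (real s - real s') \<or>
             level j' - level j = amplitude * (real s - real s')"
    using assms(4) by (auto simp: algebra_simps split: if_splits)
  then have dist: "\<bar>level j - level j'\<bar> = amplitude * \<bar>real s - real s'\<bar>"
    by (metis abs_minus_commute abs_mult abs_of_pos amplitude_pos)
  have "\<bar>real s - real s'\<bar> < real n"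
    using assms(1,2) n_ge_2 by linarith
  then have "amplitude * \<bar>real s - real s'\<bar> < amplitude * real n"
    using amplitude_pos by simp
  then have "j = j'"
    using dist amplitude_mult_n level_dist by fastforce
  then show ?thesis
    using dist amplitude_pos by simp
qed

lemma inj_on_slope_intercept: "inj_on (\<lambda>P. (slope P, intercept P)) pieces"
proof (rule inj_onI)
  fix P Q
  assume P: "P \<in> pieces" and Q: "Q \<in> pieces"
    and eq: "(slope P, intercept P) = (slope Q, intercept Q)"
  have steep: "1 \<le> slope R" if "R \<in> pieces" "R = Spoke i j" for R i j
    using that slope_Spoke_ge by (auto simp: pieces_def)
  have flat: "slope R \<le> 1 / 4" if "R = Edge j s" for R j s
    using that slope_Edge_le by simp
  show "P = Q"
  proof (cases P; cases Q)
    fix i j i' j' assume "P = Spoke i j" "Q = Spoke i' j'"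
    then show "P = Q"
      using eq level_inj by auto
  next
    fix i j j' s' assume "P = Spoke i j" "Q = Edge j' s'"
    then show "P = Q"
      using eq steep[OF P] flat by fastforce
  next
    fix j s i' j' assume "P = Edge j s" "Q = Spoke i' j'"
    then show "P = Q"
      using eq steep[OF Q] flat by fastforce
  next
    fix j s j' s' assume "P = Edge j s" "Q = Edge j' s'"
    then show "P = Q"
      using P Q eq Edge_line_inj by (auto simp: pieces_def)
  qed
qed

lemma segment_in_piece:
  assumes "closed_segment x y \<subseteq> fan"
  shows "\<exists>P\<in>pieces. closed_segment x y \<subseteq> closed_segment (piece_start P) (piece_end P)"
  using segment_subset_Union_segments[OF finite_pieces inj_on_slope_intercept piece_on_line] assms
  unfolding fan_eq_Union_pieces by blast

lemma edge_coords:
  assumes "w \<in> closed_segment (vertex j s) (vertex j (Suc s))"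
  shows "1 + real s \<le> w $ 1" "w $ 1 \<le> 2 + real s"
    and "level j \<le> w $ 2" "w $ 2 \<le> level j + amplitude"
proof -
  obtain u where u: "0 \<le> u" "u \<le> 1" "w = (1 - u) *\<^sub>R vertex j s + u *\<^sub>R vertex j (Suc s)"
    using assms by (auto simp: in_segment)
  have "w $ 1 = (1 - u) * (1 + real s) + u * (1 + real (Suc s))"
    using u(3) by simp
  then have "w $ 1 = 1 + real s + u"
    by (simp add: algebra_simps)
  then show "1 + real s \<le> w $ 1" "w $ 1 \<le> 2 + real s"
    using u by auto
  have "w $ 2 = (1 - u) * (level j + amplitude * real (s mod 2))
      + u * (level j + amplitude * real (Suc s mod 2))"
    using u(3) by simp
  then have "w $ 2 = level j + amplitude * ((1 - u) * real (s mod 2) + u * real (Suc s mod 2))"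
    by (simp add: algebra_simps)
  moreover have "0 \<le> (1 - u) * real (s mod 2) + u * real (Suc s mod 2)"
    "(1 - u) * real (s mod 2) + u * real (Suc s mod 2) \<le> 1"
    using u(1,2) by (auto simp: mod2_eq_if)
  ultimately show "level j \<le> w $ 2" "w $ 2 \<le> level j + amplitude"
    using amplitude_pos by (simp_all add: mult_left_le)
qed

lemma zigzag_coords:
  assumes "w \<in> zigzag j"
  shows "1 \<le> w $ 1" "w $ 1 \<le> real n" "level j \<le> w $ 2" "w $ 2 \<le> level j + amplitude"
proof -
  obtain s where s: "s \<le> n - 2" "w \<in> closed_segment (vertex j s) (vertex j (Suc s))"
    using assms unfolding zigzag_def by blast
  moreover have "2 + real s \<le> real n"
    using s(1) n_ge_2 by linarith
  ultimately show "1 \<le> w $ 1" "w $ 1 \<le> real n" "level j \<le> w $ 2" "w $ 2 \<le> level j + amplitude"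
    using edge_coords[OF s(2)] by linarith+
qed

lemma vertex_in_zigzag:
  assumes "s \<le> n - 1"
  shows "vertex j s \<in> zigzag j"
proof (cases s)
  case 0
  then show ?thesis
    unfolding zigzag_def by (intro UN_I[of 0]) auto
next
  case (Suc m)
  then show ?thesis
    using assms unfolding zigzag_def by (intro UN_I[of m]) auto
qed

lemma zigzag_disjoint:
  assumes "w \<in> zigzag j" "w \<in> zigzag j'"
  shows "j = j'"
proof (rule ccontr)
  assume "j \<noteq> j'"
  then show False
    using zigzag_coords[OF assms(1)] zigzag_coords[OF assms(2)] level_dist[of j j'] amplitude_le
    by linarith
qed

lemma spoke_coords:
  assumes "w \<in> closed_segment (base i) (vertex j 0)"
  shows "0 \<le> w $ 1" "w $ 1 \<le> 1" "w $ 2 = (1 - w $ 1) * real i + w $ 1 * level j"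
    and "w $ 1 = 0 \<Longrightarrow> w = base i" "w $ 1 = 1 \<Longrightarrow> w = vertex j 0"
proof -
  obtain u where u: "0 \<le> u" "u \<le> 1" "w = (1 - u) *\<^sub>R base i + u *\<^sub>R vertex j 0"
    using assms by (auto simp: in_segment)
  then have w: "w $ 1 = u" "w $ 2 = (1 - u) * real i + u * level j"
    by simp_all
  then show "0 \<le> w $ 1" "w $ 1 \<le> 1" "w $ 2 = (1 - w $ 1) * real i + w $ 1 * level j"
    using u by simp_all
  show "w $ 1 = 0 \<Longrightarrow> w = base i" "w $ 1 = 1 \<Longrightarrow> w = vertex j 0"
    using w by (simp_all add: vec_eq_iff forall_2)
qed

lemma spoke_meets_zigzag:
  assumes "w \<in> closed_segment (base i) (vertex j' 0)" "w \<in> zigzag j"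
  shows "j' = j" "w = vertex j 0"
proof -
  have "w = vertex j' 0"
    using spoke_coords[OF assms(1)] zigzag_coords[OF assms(2)] by fastforce
  then show "j' = j"
    using zigzag_disjoint[OF vertex_in_zigzag[of 0 j']] assms(2) by simp
  then show "w = vertex j 0"
    using \<open>w = vertex j' 0\<close> by simp
qed

text \<open>Here the geometric growth of the levels is needed: the slopes of spokes into the zigzags
  0, 1, 2 differ by \<open>k\<close> and \<open>k (k + 2)\<close>, which forces two base points more than \<open>k\<close> apart.\<close>
lemma not_in_three_spokes_to:
  assumes "w \<in> spokes_to 0" "w \<in> spokes_to 1" "w \<in> spokes_to 2" "0 < w $ 1" "w $ 1 < 1"
  shows False
proof -
  obtain a b d where a: "w \<in> closed_segment (base a) (vertex 0 0)" "a \<le> k"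
    and b: "w \<in> closed_segment (base b) (vertex 1 0)"
    and d: "w \<in> closed_segment (base d) (vertex 2 0)"
    using assms(1-3) unfolding spokes_to_def by blast
  define t where "t = w $ 1"
  then have t: "0 < t" "t < 1"
    using assms(4,5) by simp_all
  have ea: "w $ 2 = (1 - t) * real a + t * (real k + 1)"
    using spoke_coords(3)[OF a(1)] unfolding t_def by (simp add: level_def)
  have eb: "w $ 2 = (1 - t) * real b + t * (2 * real k + 1)"
    using spoke_coords(3)[OF b] unfolding t_def by (simp add: level_def)
  have ed: "w $ 2 = (1 - t) * real d + t * (real k + (real k + 1)^2)"
    using spoke_coords(3)[OF d] unfolding t_def by (simp add: level_def)
  have ab: "(1 - t) * (real a - real b) = t * real k"
    using ea eb by (simp add: algebra_simps)
  have ad: "(1 - t) * (real a - real d) = (real k + 2) * ((1 - t) * (real a - real b))"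
    using ea ed unfolding ab by (simp add: algebra_simps power2_eq_square)
  have "0 < t * real k"
    using t k_ge_2 by simp
  then have "0 < (1 - t) * (real a - real b)"
    using ab by simp
  then have "b < a"
    using t by (simp add: zero_less_mult_iff)
  have "real a - real d = (real k + 2) * (real a - real b)"
    using ad t by simp
  also have "\<dots> \<ge> real k + 2"
    using \<open>b < a\<close> by simp
  finally show False
    using a(2) by linarith
qed

lemma spoke_subset_fan:
  "i \<le> k \<Longrightarrow> j \<le> k \<Longrightarrow> i \<noteq> j \<Longrightarrow> closed_segment (base i) (vertex j 0) \<subseteq> fan"
  unfolding fan_def spokes_to_def by blast

lemma edge_subset_fan:
  "j \<le> k \<Longrightarrow> s \<le> n - 2 \<Longrightarrow> closed_segment (vertex j s) (vertex j (Suc s)) \<subseteq> fan"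
  unfolding fan_def zigzag_def by blast

lemma visible_from_base:
  assumes "i \<le> k" "j \<le> k" "i \<noteq> j" "w \<in> zigzag j \<union> spokes_to j"
  shows "visible_le fan n (base i) w"
  using assms(4)
proof
  assume "w \<in> spokes_to j"
  then obtain i' where "i' \<le> k" "i' \<noteq> j" "w \<in> closed_segment (base i') (vertex j 0)"
    unfolding spokes_to_def by blast
  then have "closed_segment (vertex j 0) w \<subseteq> closed_segment (base i') (vertex j 0)"
    by (simp add: subset_closed_segment)
  then have "closed_segment (vertex j 0) w \<subseteq> fan"
    using spoke_subset_fan[OF \<open>i' \<le> k\<close> assms(2) \<open>i' \<noteq> j\<close>] by blast
  then show ?thesis
    using spoke_subset_fan[OF assms(1-3)] n_ge_2
    by (intro visible_le_walk[where ps = "[vertex j 0]"]) auto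
next
  assume "w \<in> zigzag j"
  then obtain s where s: "s \<le> n - 2" "w \<in> closed_segment (vertex j s) (vertex j (Suc s))"
    unfolding zigzag_def by blast
  then have "closed_segment (vertex j s) w \<subseteq> closed_segment (vertex j s) (vertex j (Suc s))"
    by (simp add: subset_closed_segment)
  then have "closed_segment (vertex j s) w \<subseteq> fan"
    using edge_subset_fan[OF assms(2) s(1)] by blast
  define L where "L = map (vertex j) [0..<Suc s]"
  have L: "L \<noteq> []" "hd L = vertex j 0" "last L = vertex j s" "length L < n"
    unfolding L_def using s(1) n_ge_2 by (simp_all add: hd_map last_map del: upt_Suc)
  have "successively (\<lambda>a b. closed_segment a b \<subseteq> fan) L"
    unfolding L_def using edge_subset_fan[OF assms(2)] s(1)
    by (auto simp: successively_conv_nth simp del: upt_Suc)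
  then have "successively (\<lambda>a b. closed_segment a b \<subseteq> fan) (base i # L @ [w])"
    using spoke_subset_fan[OF assms(1-3)] \<open>closed_segment (vertex j s) w \<subseteq> fan\<close> L
    by (simp add: successively_append_iff successively_Cons)
  then show ?thesis
    using L(4) by (rule visible_le_walk)
qed

lemma few_points_visible:
  assumes "T \<subseteq> fan" "finite T" "card T \<le> k"
  shows "\<exists>z\<in>fan. \<forall>t\<in>T. visible_le fan n z t"
proof -
  have "\<forall>t\<in>T. \<exists>j. j \<le> k \<and> t \<in> zigzag j \<union> spokes_to j"
    using assms(1) unfolding fan_def by blast
  then obtain target
    where target: "\<And>t. t \<in> T \<Longrightarrow>
      target t \<le> k \<and> t \<in> zigzag (target t) \<union> spokes_to (target t)"
    by metis
  have "\<not> {..k} \<subseteq> target ` T"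
  proof
    assume "{..k} \<subseteq> target ` T"
    then have "card {..k} \<le> card (target ` T)"
      using assms(2) by (intro card_mono) simp_all
    then show False
      using card_image_le[OF assms(2), of target] assms(3) by simp
  qed
  then obtain i where i: "i \<le> k" "i \<notin> target ` T"
    by blast
  define j where "j = (if i = 0 then 1 else 0 :: nat)"
  have "j \<le> k" "i \<noteq> j"
    using k_ge_2 unfolding j_def by auto
  then have "base i \<in> fan"
    using spoke_subset_fan[OF i(1)] ends_in_segment(1) by blast
  moreover have "visible_le fan n (base i) t" if "t \<in> T" for t
    using visible_from_base[OF i(1)] target[OF that] i(2) that by blast
  ultimately show ?thesis by blast
qed

definition potential :: "nat \<Rightarrow> real^2 \<Rightarrow> real" where
  "potential j w =
     (if w \<in> zigzag j then real n - w $ 1 else if w \<in> spokes_to j then real n else real n + 1)"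

lemma potential_on_zigzag: "w \<in> zigzag j \<Longrightarrow> potential j w = real n - w $ 1"
  by (simp add: potential_def)

lemma potential_on_spokes_to: "w \<in> spokes_to j \<Longrightarrow> potential j w \<le> real n"
  using zigzag_coords(1)[of w j] by (auto simp: potential_def)

lemma potential_off_zigzag:
  "w \<notin> zigzag j \<Longrightarrow> real n \<le> potential j w \<and> potential j w \<le> real n + 1"
  by (simp add: potential_def)

lemma potential_le_off_zigzag:
  "x \<notin> zigzag j \<Longrightarrow> y \<notin> zigzag j \<Longrightarrow> potential j x \<le> potential j y + 1"
  by (simp add: potential_def)

lemma potential_edge_le:
  assumes "s \<le> n - 2"
    and "x \<in> closed_segment (vertex j' s) (vertex j' (Suc s))"
    and "y \<in> closed_segment (vertex j' s) (vertex j' (Suc s))"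
  shows "potential j x \<le> potential j y + 1"
proof -
  have x: "x \<in> zigzag j'" and y: "y \<in> zigzag j'"
    using assms unfolding zigzag_def by auto
  show ?thesis
  proof (cases "j' = j")
    case True
    moreover have "y $ 1 \<le> x $ 1 + 1"
      using edge_coords(1,2)[OF assms(2)] edge_coords(1,2)[OF assms(3)] by linarith
    ultimately show ?thesis
      using potential_on_zigzag x y by simp
  next
    case False
    then have "x \<notin> zigzag j" "y \<notin> zigzag j"
      using zigzag_disjoint x y by blast+
    then show ?thesis
      by (rule potential_le_off_zigzag)
  qed
qed

lemma potential_spoke_le:
  assumes "i' \<le> k" "i' \<noteq> j'"
    and x: "x \<in> closed_segment (base i') (vertex j' 0)"
    and y: "y \<in> closed_segment (base i') (vertex j' 0)"
  shows "potential j x \<le> potential j y + 1"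
proof (cases "j' = j")
  case True
  then have "potential j x \<le> real n"
    using assms potential_on_spokes_to unfolding spokes_to_def by blast
  moreover have "real n - 1 \<le> potential j y"
  proof (cases "y \<in> zigzag j")
    case True
    then show ?thesis
      using spoke_meets_zigzag(2)[OF y True] potential_on_zigzag by simp
  next
    case False
    then show ?thesis
      using potential_off_zigzag by fastforce
  qed
  ultimately show ?thesis by simp
next
  case False
  then show ?thesis
    using potential_le_off_zigzag spoke_meets_zigzag(1) x y by blast
qed

lemma potential_segment_le:
  assumes "closed_segment x y \<subseteq> fan"
  shows "potential j x \<le> potential j y + 1"
proof -
  obtain P where "P \<in> pieces"
    and "x \<in> closed_segment (piece_start P) (piece_end P)"
        "y \<in> closed_segment (piece_start P) (piece_end P)"
    using segment_in_piece[OF assms] by blast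
  then show ?thesis
    using potential_edge_le potential_spoke_le by (cases P) (auto simp: pieces_def)
qed

lemma potential_sees_le:
  assumes "sees_by_path fan m w y"
  shows "potential j w \<le> potential j y + real m"
proof -
  obtain p where p: "length p = m + 1" "p ! 0 = w" "p ! m = y"
    "\<forall>i<m. closed_segment (p ! i) (p ! Suc i) \<subseteq> fan"
    using assms unfolding sees_by_path_def by blast
  have "potential j (p ! 0) \<le> potential j (p ! i) + real i" if "i \<le> m" for i
    using that
  proof (induction i)
    case (Suc i)
    then have "potential j (p ! i) \<le> potential j (p ! Suc i) + 1"
      using potential_segment_le p(4) by simp
    then show ?case
      using Suc by simp
  qed simp
  then show ?thesis
    using p(2,3) by force
qed

lemma base_notin_spokes_to: "base i \<notin> spokes_to i"
proof
  assume "base i \<in> spokes_to i"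
  then obtain i' where "i' \<noteq> i" "base i \<in> closed_segment (base i') (vertex i 0)"
    unfolding spokes_to_def by blast
  then show False
    using spoke_coords(4) by (metis base_nth of_nat_eq_iff)
qed

lemma exists_zigzag_avoiding:
  assumes "w \<in> fan"
  shows "\<exists>j\<le>k. w \<notin> zigzag j \<and> w \<notin> spokes_to j"
proof (cases "\<exists>l. w \<in> zigzag l")
  case True
  then obtain l where l: "w \<in> zigzag l" by blast
  define j where "j = (if l = 0 then 1 else 0 :: nat)"
  have "j \<le> k" "j \<noteq> l"
    using k_ge_2 unfolding j_def by auto
  moreover have "w \<notin> zigzag j"
    using zigzag_disjoint l \<open>j \<noteq> l\<close> by blast
  moreover have "w \<notin> spokes_to j"
    using spoke_meets_zigzag(1)[OF _ l] \<open>j \<noteq> l\<close> unfolding spokes_to_def by blast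
  ultimately show ?thesis by blast
next
  case False
  then obtain i0 j0 where "i0 \<le> k" and w: "w \<in> closed_segment (base i0) (vertex j0 0)"
    using assms unfolding fan_def spokes_to_def by blast
  have "w $ 1 \<noteq> 1"
    using spoke_coords(5)[OF w] vertex_in_zigzag[of 0 j0] False by auto
  then consider "w = base i0" | "0 < w $ 1" "w $ 1 < 1"
    using spoke_coords(1,2,4)[OF w] by fastforce
  then show ?thesis
  proof cases
    case 1
    then show ?thesis
      using \<open>i0 \<le> k\<close> base_notin_spokes_to False by blast
  next
    case 2
    then obtain j where "j \<in> {0, 1, 2}" "w \<notin> spokes_to j"
      using not_in_three_spokes_to by blast
    moreover have "j \<le> k"
      using calculation(1) k_ge_2 by auto
    ultimately show ?thesis
      using False by blast
  qed
qed

lemma ends_not_visible: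
  "\<not> (\<exists>z\<in>fan. \<forall>j\<le>k. visible_le fan n z (vertex j (n - 1)))"
proof
  assume "\<exists>z\<in>fan. \<forall>j\<le>k. visible_le fan n z (vertex j (n - 1))"
  then obtain z where "z \<in> fan" and vis: "\<forall>j\<le>k. visible_le fan n z (vertex j (n - 1))"
    by blast
  then obtain j where "j \<le> k" "z \<notin> zigzag j" "z \<notin> spokes_to j"
    using exists_zigzag_avoiding by blast
  then have "potential j z = real n + 1"
    by (simp add: potential_def)
  moreover obtain m where "m \<le> n" "sees_by_path fan m z (vertex j (n - 1))"
    using vis \<open>j \<le> k\<close> unfolding visible_le_def by blast
  moreover have "potential j (vertex j (n - 1)) = 0"
    using potential_on_zigzag[OF vertex_in_zigzag] n_ge_2 by simp
  ultimately show False
    using potential_sees_le[of m z "vertex j (n - 1)" j] by linarith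
qed

lemma inj_on_ends: "inj_on (\<lambda>j. vertex j (n - 1)) {..k}"
proof (rule inj_onI)
  fix j j' assume "vertex j (n - 1) = vertex j' (n - 1)"
  then have "level j = level j'"
    by (metis add_right_cancel vertex_nth(2))
  then show "j = j'"
    by (rule level_inj)
qed

end

theorem theorem1p6:
  fixes n k :: nat
  assumes "n \<ge> 2" and "k \<ge> 2"
  shows "\<exists>S :: (real^2) set.
     (\<forall>T. T \<subseteq> S \<and> finite T \<and> card T \<le> k \<longrightarrow>
          (\<exists>z\<in>S. \<forall>t\<in>T. visible_le S n z t)) \<and>
     (\<exists>T. T \<subseteq> S \<and> finite T \<and> card T = k + 1 \<and>
          \<not> (\<exists>z\<in>S. \<forall>t\<in>T. visible_le S n z t))"
proof -
  interpret zigzag_fan n k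
    using assms by unfold_locales
  define ends where "ends = (\<lambda>j. vertex j (n - 1)) ` {..k}"
  have "ends \<subseteq> fan"
    unfolding ends_def fan_def using vertex_in_zigzag by blast
  moreover have "card ends = k + 1"
    unfolding ends_def using card_image[OF inj_on_ends] by simp
  moreover have "\<not> (\<exists>z\<in>fan. \<forall>t\<in>ends. visible_le fan n z t)"
    unfolding ends_def using ends_not_visible by blast
  ultimately show ?thesis
    using few_points_visible unfolding ends_def by blast
qed

end
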